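(* Let $L,T>0$, $0<\gamma<1$, $\alpha>0$, let $K\ge1$ be an integer, $\Delta t=T/K$, $t_p=p\Delta t$, $\beta=\Gamma(2-\gamma)\Delta t^{\gamma}$ and $b_j=(j+1)^{1-\gamma}-j^{1-\gamma}$. Let $y(x,t)$ be the exact solution of $$\frac{\partial^{\gamma}y}{\partial t^{\gamma}}+\alpha\frac{\partial^4 y}{\partial x^4}=u(x,t),\quad (x,t)\in[0,L]\times[0,T],$$ with $y(x,0)=v_0(x)$, $y(0,t)=y(L,t)=0$, $y_{xx}(0,t)=y_{xx}(L,t)=0$, where $\partial_t^\gamma$ is the Caputo derivative, and assume $y$ is smooth enough that the L1 approximation satisfies $|l^{p}_{\Delta t}(x)|\le c\,\Delta t^{2-\gamma}$ for all $x\in[0,L]$ and $p=1,\dots,K$, with $c$ depending only on $y$, where $l^{p}_{\Delta t}(x)=\frac{\partial^\gamma y}{\partial t^\gamma}(x,t_p)-\frac{1}{\Gamma(2-\gamma)}\sum_{j=0}^{p-1}b_j\frac{y(x,t_{p-j})-y(x,t_{p-j-1})}{\Delta t^{\gamma}}$. Let $\{y^p\}_{p=0}^{K}$ be the time-discrete solution: $y^0=v_0$ and, for $p=1,\dots,K$, $y^p\in H^4(0,L)$ with $y^p(0)=y^p(L)=0$, $y^p_{xx}(0)=y^p_{xx}(L)=0$ and $$y^{1}+\beta\alpha\,y^{1}_{xxxx}=y^0+\beta u(\cdot,t_1),$$ $$y^{p+1}+\beta\alpha\,y^{p+1}_{xxxx}=(1-b_1)y^{p}+\sum_{j=1}^{p-1}(b_j-b_{j+1})y^{p-j}+b_p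 y^{0}+\beta u(\cdot,t_{p+1}),\quad p=1,\dots,K-1.$$ Then there is a constant $c_{y,\gamma}$ depending only on $y$ and $\gamma$ such that $$\|y(\cdot,t_p)-y^{p}\|_{2}\le c_{y,\gamma}\,T^{\gamma}\,\Delta t^{2-\gamma},\qquad p=1,2,\dots,K.$$
   Context: The Caputo derivative of order $\gamma\in(0,1)$ is $\frac{\partial^\gamma y}{\partial t^\gamma}(x,t)=\frac{1}{\Gamma(1-\gamma)}\int_0^t \frac{\partial y(x,s)}{\partial s}(t-s)^{-\gamma}ds$. $\|g\|_0$ is the $L^2(0,L)$ norm and $\|g\|_2=\big(\|g\|_0^2+\beta\alpha\|g_{xx}\|_0^2\big)^{1/2}$. Empty sums are zero. *)

theory Defs
  imports "HOL-Analysis.Analysis"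
begin

definition dxk :: "nat \<Rightarrow> (real \<Rightarrow> real \<Rightarrow> real) \<Rightarrow> real \<Rightarrow> real \<Rightarrow> real" where
  "dxk k y t = (deriv ^^ k) (\<lambda>x. y x t)"

definition caputo :: "real \<Rightarrow> (real \<Rightarrow> real \<Rightarrow> real) \<Rightarrow> real \<Rightarrow> real \<Rightarrow> real" where
  "caputo \<gamma> y x t = (1 / Gamma (1 - \<gamma>)) *
     integral {0..t} (\<lambda>s. deriv (\<lambda>r. y x r) s * (t - s) powr (- \<gamma>))"

definition bcoef :: "real \<Rightarrow> nat \<Rightarrow> real" where
  "bcoef \<gamma> j = (real j + 1) powr (1 - \<gamma>) - real j powr (1 - \<gamma>)"

definition l1_resid :: "real \<Rightarrow> real \<Rightarrow> nat \<Rightarrow> (real \<Rightarrow> real \<Rightarrow> real) \<Rightarrow> real \<Rightarrow> nat \<Rightarrow> real" where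
  "l1_resid \<gamma> T K y x p =
     caputo \<gamma> y x (real p * (T / real K))
     - (1 / Gamma (2 - \<gamma>)) *
       (\<Sum>j<p. bcoef \<gamma> j * (y x (real (p - j) * (T / real K)) - y x (real (p - j - 1) * (T / real K)))
                 / (T / real K) powr \<gamma>)"

definition norm0 :: "real \<Rightarrow> (real \<Rightarrow> real) \<Rightarrow> real" where
  "norm0 L g = sqrt (integral {0..L} (\<lambda>x. (g x)\<^sup>2))"

text \<open>The norm ||g||_2 = (||g||_0^2 + beta alpha ||g_xx||_0^2)^(1/2); gxx is the second derivative of g.\<close>
definition norm2 :: "real \<Rightarrow> real \<Rightarrow> real \<Rightarrow> (real \<Rightarrow> real) \<Rightarrow> (real \<Rightarrow> real) \<Rightarrow> real" where
  "norm2 L \<beta> \<alpha> g gxx = sqrt ((norm0 L g)\<^sup>2 + \<beta> * \<alpha> * (norm0 L gxx)\<^sup>2)"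

text \<open>Membership in H^4(0,L), with D k the k-th (weak) derivative of f:
  D 0 = f on [0,L], D k is the integral of D (k+1) for k < 4, and D 4 is in L^2(0,L).\<close>
definition H4 :: "real \<Rightarrow> (real \<Rightarrow> real) \<Rightarrow> (nat \<Rightarrow> real \<Rightarrow> real) \<Rightarrow> bool" where
  "H4 L f D \<longleftrightarrow>
     (\<forall>x\<in>{0..L}. D 0 x = f x) \<and>
     (\<forall>k<4. \<forall>x\<in>{0..L}. D k x = D k 0 + integral {0..x} (D (Suc k))) \<and>
     D 4 absolutely_integrable_on {0..L} \<and>
     (\<lambda>x. (D 4 x)\<^sup>2) integrable_on {0..L}"

text \<open>Time-discrete solution {y^p}_{p=0..K} (ys p = y^p, Ds p k = k-th x-derivative of y^p).
  beta = Gamma(2-gamma) Delta t^gamma.  Equations hold a.e. in (0,L).\<close>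
definition discrete_solution ::
  "real \<Rightarrow> real \<Rightarrow> real \<Rightarrow> real \<Rightarrow> (real \<Rightarrow> real \<Rightarrow> real) \<Rightarrow> (real \<Rightarrow> real) \<Rightarrow> nat
   \<Rightarrow> (nat \<Rightarrow> real \<Rightarrow> real) \<Rightarrow> (nat \<Rightarrow> nat \<Rightarrow> real \<Rightarrow> real) \<Rightarrow> bool" where
  "discrete_solution L T \<gamma> \<alpha> u v0 K ys Ds \<longleftrightarrow>
     (let dt = T / real K; \<beta> = Gamma (2 - \<gamma>) * dt powr \<gamma> in
      (\<forall>x\<in>{0..L}. ys 0 x = v0 x) \<and>
      (\<forall>p\<in>{1..K}. H4 L (ys p) (Ds p) \<and> ys p 0 = 0 \<and> ys p L = 0 \<and>
                   Ds p 2 0 = 0 \<and> Ds p 2 L = 0) \<and>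
      (\<exists>N. negligible N \<and> (\<forall>x\<in>{0..L} - N.
          ys 1 x + \<beta> * \<alpha> * Ds 1 4 x = ys 0 x + \<beta> * u x dt)) \<and>
      (\<forall>p\<in>{1..K - 1}. \<exists>N. negligible N \<and> (\<forall>x\<in>{0..L} - N.
          ys (p + 1) x + \<beta> * \<alpha> * Ds (p + 1) 4 x =
            (1 - bcoef \<gamma> 1) * ys p x
            + (\<Sum>j\<in>{1..p - 1}. (bcoef \<gamma> j - bcoef \<gamma> (j + 1)) * ys (p - j) x)
            + bcoef \<gamma> p * ys 0 x + \<beta> * u x (real (p + 1) * dt))))"

end

theory Submission
  imports Defs
begin

text \<open>
  Let e_p = y(t_p) - y^p. The exact solution satisfies the L1 scheme up to the truncation error,
  so e_0 = 0 and
    e_(p+1) + \<beta>\<alpha> (e_(p+1))_xxxx = \<Sum>_(j<p) (b_j - b_(j+1)) e_(p-j) - \<beta> l_(p+1).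
  Testing with e_(p+1) and integrating by parts twice (the boundary terms vanish because
  e = e_xx = 0 at both ends) gives the stability bound
    ||e_(p+1)||_2 \<le> \<Sum>_(j<p) (b_j - b_(j+1)) ||e_(p-j)||_2 + M,   M = \<beta> c \<Delta>t^(2-\<gamma>) sqrt L.
  The weights are nonnegative and sum to 1 - b_p, so by induction ||e_q||_2 \<le> M / b_(q-1).
  Finally b_(q-1) \<ge> (1-\<gamma>) q^(-\<gamma>) by the mean value theorem, and with \<beta> = \<Gamma>(2-\<gamma>) \<Delta>t^\<gamma>
  and q \<Delta>t \<le> T this is the claim with c_(y,\<gamma>) = \<Gamma>(2-\<gamma>) c sqrt L / (1-\<gamma>).
\<close>

section \<open>Integration by parts against an indefinite integral\<close>

lemma integral_le_except_negligible:
  fixes f g :: "'a::euclidean_space \<Rightarrow> real"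
  assumes f: "f integrable_on S" and g: "g integrable_on S" and N: "negligible N"
    and le: "\<And>x. x \<in> S - N \<Longrightarrow> f x \<le> g x"
  shows "integral S f \<le> integral S g"
proof -
  define f' where "f' x = (if x \<in> N then g x else f x)" for x
  have eq: "f' x = f x" if "x \<in> S - N" for x using that by (simp add: f'_def)
  have "integral S f = integral S f'" by (rule integral_spike[OF N eq])
  also have "\<dots> \<le> integral S g"
    by (rule integral_le[OF integrable_spike[OF f N eq] g]) (use le in \<open>auto simp: f'_def\<close>)
  finally show ?thesis .
qed

lemma integral_interval_diff:
  fixes h :: "real \<Rightarrow> real"
  assumes "h integrable_on {a..b}" "a \<le> s" "s \<le> t" "t \<le> b"
  shows "integral {a..t} h - integral {a..s} h = integral {s..t} h"
  using Henstock_Kurzweil_Integration.integral_combine[where a=a and c=s and b=t and f=h]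
    integrable_on_subinterval[OF assms(1), of a t] assms
  by simp

lemma absolutely_integrable_mult_continuous:
  fixes f g :: "real \<Rightarrow> real"
  assumes "f absolutely_integrable_on {a..b}" "continuous_on {a..b} g"
  shows "(\<lambda>x. f x * g x) absolutely_integrable_on {a..b}"
proof -
  have "(\<lambda>x. g x * f x) absolutely_integrable_on {a..b}"
  proof (rule absolutely_integrable_bounded_measurable_product_real)
    show "g \<in> borel_measurable (lebesgue_on {a..b})"
      by (rule continuous_imp_measurable_on_sets_lebesgue[OF assms(2)]) auto
    show "bounded (g ` {a..b})"
      by (intro compact_imp_bounded compact_continuous_image assms(2) compact_Icc)
  qed (use assms in auto)
  then show ?thesis by (simp only: mult.commute)
qed

lemma continuous_on_if_indefinite_integral:
  fixes F g :: "real \<Rightarrow> real"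
  assumes "g integrable_on {a..b}" and "\<forall>x\<in>{a..b}. F x = F a + integral {a..x} g"
  shows "continuous_on {a..b} F"
  by (rule continuous_on_eq[OF _ assms(2)[rule_format, symmetric]])
    (intro continuous_intros indefinite_integral_continuous_1 assms(1))

lemma abs_diff_le_if_fine_increments_le:
  fixes \<Phi> V :: "real \<Rightarrow> real"
  assumes "a \<le> b" and "0 < d"
    and fine: "\<forall>s t. a \<le> s \<longrightarrow> s \<le> t \<longrightarrow> t \<le> b \<longrightarrow> t - s < d \<longrightarrow> \<bar>\<Phi> t - \<Phi> s\<bar> \<le> e * (V t - V s)"
  shows "\<bar>\<Phi> b - \<Phi> a\<bar> \<le> e * (V b - V a)"
proof -
  obtain n :: nat where n: "(b - a) / d < real n" using reals_Archimedean2 by blast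
  have "0 \<le> (b - a) / d" using \<open>a \<le> b\<close> \<open>0 < d\<close> by simp
  then have "n > 0" using n by (intro gr0I) auto
  define h where "h = (b - a) / real n"
  define x where "x k = a + real k * h" for k
  have "h \<ge> 0" using \<open>a \<le> b\<close> by (simp add: h_def)
  have x_Suc: "x (Suc k) = x k + h" for k by (simp add: x_def algebra_simps)
  have x_bounds: "a \<le> x k \<and> x k \<le> b" if "k \<le> n" for k
  proof -
    have "real k * h \<le> real n * h" using that \<open>h \<ge> 0\<close> by (intro mult_right_mono) auto
    also have "real n * h = b - a" using \<open>n > 0\<close> by (simp add: h_def)
    finally show ?thesis using \<open>h \<ge> 0\<close> by (simp add: x_def)
  qed
  have "h < d" using n \<open>0 < d\<close> \<open>n > 0\<close> by (simp add: h_def field_simps)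
  have x_ends: "x 0 = a" "x n = b" using \<open>n > 0\<close> by (simp_all add: x_def h_def)
  have "\<bar>\<Phi> b - \<Phi> a\<bar> = \<bar>\<Sum>k<n. \<Phi> (x (Suc k)) - \<Phi> (x k)\<bar>"
    by (simp add: sum_lessThan_telescope[of "\<lambda>k. \<Phi> (x k)"] x_ends)
  also have "\<dots> \<le> (\<Sum>k<n. e * (V (x (Suc k)) - V (x k)))"
  proof (rule order_trans[OF sum_abs sum_mono])
    fix k assume "k \<in> {..<n}"
    then have "a \<le> x k" "x (Suc k) \<le> b" using x_bounds[of k] x_bounds[of "Suc k"] by auto
    moreover have "x k \<le> x (Suc k)" "x (Suc k) - x k < d" using \<open>h \<ge> 0\<close> \<open>h < d\<close> by (simp_all add: x_Suc)
    ultimately show "\<bar>\<Phi> (x (Suc k)) - \<Phi> (x k)\<bar> \<le> e * (V (x (Suc k)) - V (x k))" using fine by blast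
  qed
  also have "\<dots> = e * (V b - V a)"
    by (simp add: sum_distrib_left[symmetric] sum_lessThan_telescope[of "\<lambda>k. V (x k)"] x_ends)
  finally show ?thesis .
qed

lemma eq_if_small_increments:
  fixes \<Phi> V :: "real \<Rightarrow> real"
  assumes "a \<le> b"
    and small: "\<And>e. e > 0 \<Longrightarrow> \<exists>d>0. \<forall>s t. a \<le> s \<longrightarrow> s \<le> t \<longrightarrow> t \<le> b \<longrightarrow> t - s < d \<longrightarrow>
                  \<bar>\<Phi> t - \<Phi> s\<bar> \<le> e * (V t - V s)"
  shows "\<Phi> b = \<Phi> a"
proof -
  have bound: "\<bar>\<Phi> b - \<Phi> a\<bar> \<le> e * (V b - V a)" if "e > 0" for e
    using small[OF that] abs_diff_le_if_fine_increments_le[OF \<open>a \<le> b\<close>] by blast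
  have V_mono: "V a \<le> V b" using bound[of 1] by simp
  have "\<bar>\<Phi> b - \<Phi> a\<bar> \<le> 0"
  proof (rule field_le_epsilon)
    fix e :: real assume "e > 0"
    have "\<bar>\<Phi> b - \<Phi> a\<bar> \<le> e / (V b - V a + 1) * (V b - V a)"
      using \<open>e > 0\<close> V_mono by (intro bound) simp
    also have "\<dots> \<le> e" using \<open>e > 0\<close> V_mono by (simp add: field_simps)
    finally show "\<bar>\<Phi> b - \<Phi> a\<bar> \<le> 0 + e" by simp
  qed
  then show ?thesis by simp
qed

lemma integration_by_parts_increment:
  fixes f F g g' :: "real \<Rightarrow> real"
  assumes st: "a \<le> s" "s \<le> t" "t \<le> b" and f: "f absolutely_integrable_on {a..b}"
    and F: "\<forall>x\<in>{a..b}. F x = F a + integral {a..x} f"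
    and g: "\<forall>x\<in>{a..b}. (g has_real_derivative g' x) (at x within {a..b})"
    and g': "continuous_on {a..b} g'"
  shows "(integral {a..t} (\<lambda>x. f x * g x) - F t * g t + integral {a..t} (\<lambda>x. F x * g' x))
       - (integral {a..s} (\<lambda>x. f x * g x) - F s * g s + integral {a..s} (\<lambda>x. F x * g' x))
       = integral {s..t} (\<lambda>x. f x * (g x - g s)) + integral {s..t} (\<lambda>x. (F x - F t) * g' x)"
proof -
  have sub: "{s..t} \<subseteq> {a..b}" using st by auto
  have f_int: "f integrable_on {a..b}" using f by (simp add: set_lebesgue_integral_eq_integral(1))
  have fg: "(\<lambda>x. f x * g x) integrable_on {a..b}"
    using absolutely_integrable_mult_continuous[OF f DERIV_continuous_on[OF g[rule_format]]]
    by (rule set_lebesgue_integral_eq_integral(1))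
  have Fg': "(\<lambda>x. F x * g' x) integrable_on {a..b}"
    by (intro integrable_continuous_real continuous_intros g' continuous_on_if_indefinite_integral[OF f_int F])
  have "F t - F s = integral {s..t} f"
    using F[rule_format, of t] F[rule_format, of s] integral_interval_diff[OF f_int st] st by simp
  then have "(f has_integral (F t - F s)) {s..t}"
    using integrable_on_subinterval[OF f_int sub] by (simp add: has_integral_integral)
  then have "((\<lambda>x. f x * (g x - g s)) has_integral
      integral {s..t} (\<lambda>x. f x * g x) - (F t - F s) * g s) {s..t}"
    using has_integral_diff[OF integrable_integral[OF integrable_on_subinterval[OF fg sub]] has_integral_mult_left]
    by (simp add: right_diff_distrib)
  moreover have "(g' has_integral (g t - g s)) {s..t}"
  proof (rule fundamental_theorem_of_calculus[OF st(2)])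
    fix x assume "x \<in> {s..t}"
    then have "(g has_real_derivative g' x) (at x within {s..t})"
      using g sub by (blast intro: has_field_derivative_subset)
    then show "(g has_vector_derivative g' x) (at x within {s..t})"
      by (simp add: has_real_derivative_iff_has_vector_derivative)
  qed
  then have "((\<lambda>x. (F x - F t) * g' x) has_integral
      integral {s..t} (\<lambda>x. F x * g' x) - F t * (g t - g s)) {s..t}"
    using has_integral_diff[OF integrable_integral[OF integrable_on_subinterval[OF Fg' sub]] has_integral_mult_right]
    by (simp add: left_diff_distrib)
  ultimately show ?thesis
    using integral_interval_diff[OF fg st] integral_interval_diff[OF Fg' st]
    by (simp add: integral_unique algebra_simps)
qed

lemma integration_by_parts_remainder_le:
  fixes f F g g' :: "real \<Rightarrow> real"
  assumes "s \<le> t" and f: "f absolutely_integrable_on {s..t}"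
    and g: "continuous_on {s..t} g" and Fg': "continuous_on {s..t} (\<lambda>x. (F x - F t) * g' x)"
    and g_osc: "\<And>x. x \<in> {s..t} \<Longrightarrow> \<bar>g x - g s\<bar> \<le> e"
    and F_osc: "\<And>x. x \<in> {s..t} \<Longrightarrow> \<bar>F x - F t\<bar> \<le> e"
    and g'_bound: "\<And>x. x \<in> {s..t} \<Longrightarrow> \<bar>g' x\<bar> \<le> M"
  shows "\<bar>integral {s..t} (\<lambda>x. f x * (g x - g s)) + integral {s..t} (\<lambda>x. (F x - F t) * g' x)\<bar>
         \<le> e * (integral {s..t} (\<lambda>x. \<bar>f x\<bar>) + M * (t - s))"
proof -
  have "\<bar>integral {s..t} (\<lambda>x. f x * (g x - g s))\<bar> \<le> integral {s..t} (\<lambda>x. \<bar>f x\<bar> * e)"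
  proof (rule integral_norm_bound_integral[where 'n=real and 'a=real, unfolded real_norm_def])
    show "(\<lambda>x. f x * (g x - g s)) integrable_on {s..t}"
      using absolutely_integrable_mult_continuous[OF f continuous_on_diff[OF g continuous_on_const]]
      by (rule set_lebesgue_integral_eq_integral(1))
    show "(\<lambda>x. \<bar>f x\<bar> * e) integrable_on {s..t}"
      using f by (intro integrable_on_mult_left) (simp add: absolutely_integrable_on_def)
    show "\<bar>f x * (g x - g s)\<bar> \<le> \<bar>f x\<bar> * e" if "x \<in> {s..t}" for x
      using g_osc[OF that] by (simp add: abs_mult mult_left_mono)
  qed
  moreover have "\<bar>integral {s..t} (\<lambda>x. (F x - F t) * g' x)\<bar> \<le> integral {s..t} (\<lambda>x. e * M)"
  proof (rule integral_norm_bound_integral[where 'n=real and 'a=real, unfolded real_norm_def])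
    show "(\<lambda>x. (F x - F t) * g' x) integrable_on {s..t}" by (rule integrable_continuous_real[OF Fg'])
    show "\<bar>(F x - F t) * g' x\<bar> \<le> e * M" if "x \<in> {s..t}" for x
      using F_osc[OF that] g'_bound[OF that] by (simp add: abs_mult mult_mono)
  qed (rule integrable_const_ivl)
  ultimately show ?thesis using \<open>s \<le> t\<close> by (simp add: algebra_simps)
qed

lemma integration_by_parts_indefinite_integral:
  fixes f F g g' :: "real \<Rightarrow> real"
  assumes "a \<le> b" and f: "f absolutely_integrable_on {a..b}"
    and F: "\<forall>x\<in>{a..b}. F x = F a + integral {a..x} f"
    and g: "\<forall>x\<in>{a..b}. (g has_real_derivative g' x) (at x within {a..b})"
    and g': "continuous_on {a..b} g'"
  shows "integral {a..b} (\<lambda>x. f x * g x) = F b * g b - F a * g a - integral {a..b} (\<lambda>x. F x * g' x)"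
proof -
  have absf_int: "(\<lambda>x. \<bar>f x\<bar>) integrable_on {a..b}" using f by (simp add: absolutely_integrable_on_def)
  have g_cont: "continuous_on {a..b} g" by (rule DERIV_continuous_on) (use g in blast)
  have F_cont: "continuous_on {a..b} F"
    using continuous_on_if_indefinite_integral[OF _ F] f by (simp add: set_lebesgue_integral_eq_integral(1))
  obtain M where M: "\<And>x. x \<in> {a..b} \<Longrightarrow> \<bar>g' x\<bar> \<le> M"
  proof -
    have "bounded (g' ` {a..b})" by (intro compact_imp_bounded compact_continuous_image g' compact_Icc)
    then show ?thesis using that unfolding bounded_iff by (metis image_eqI real_norm_def)
  qed
  text \<open>
    As \<open>f\<close> is merely integrable, \<open>F\<close> need not be differentiable everywhere. Instead the defect
    \<open>\<Phi>\<close> is shown to be constant: by uniform continuity of \<open>g\<close> and \<open>F\<close>, its increments over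
    short intervals are at most \<open>e\<close> times those of \<open>V\<close>.
  \<close>
  define \<Phi> where "\<Phi> t = integral {a..t} (\<lambda>x. f x * g x) - F t * g t + integral {a..t} (\<lambda>x. F x * g' x)" for t
  define V where "V t = integral {a..t} (\<lambda>x. \<bar>f x\<bar>) + M * t" for t
  have "\<Phi> b = \<Phi> a"
  proof (rule eq_if_small_increments[OF \<open>a \<le> b\<close>])
    fix e :: real assume "e > 0"
    obtain d1 where "d1 > 0" and d1: "\<forall>x\<in>{a..b}. \<forall>x'\<in>{a..b}. dist x' x < d1 \<longrightarrow> dist (g x') (g x) < e"
      using compact_uniformly_continuous[OF g_cont compact_Icc] \<open>e > 0\<close>
      unfolding uniformly_continuous_on_def by blast
    obtain d2 where "d2 > 0" and d2: "\<forall>x\<in>{a..b}. \<forall>x'\<in>{a..b}. dist x' x < d2 \<longrightarrow> dist (F x') (F x) < e"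
      using compact_uniformly_continuous[OF F_cont compact_Icc] \<open>e > 0\<close>
      unfolding uniformly_continuous_on_def by blast
    have "\<bar>\<Phi> t - \<Phi> s\<bar> \<le> e * (V t - V s)" if st: "a \<le> s" "s \<le> t" "t \<le> b" "t - s < min d1 d2" for s t
    proof -
      have sub: "{s..t} \<subseteq> {a..b}" using st by auto
      have "\<bar>\<Phi> t - \<Phi> s\<bar> \<le> e * (integral {s..t} (\<lambda>x. \<bar>f x\<bar>) + M * (t - s))"
        unfolding \<Phi>_def integration_by_parts_increment[OF st(1-3) f F g g']
      proof (rule integration_by_parts_remainder_le[OF st(2) absolutely_integrable_on_subinterval[OF f sub]
            continuous_on_subset[OF g_cont sub]])
        show "continuous_on {s..t} (\<lambda>x. (F x - F t) * g' x)"
          using sub by (intro continuous_intros continuous_on_subset[OF F_cont] continuous_on_subset[OF g'])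
        fix x assume x: "x \<in> {s..t}"
        have "dist x s < d1" "dist x t < d2" using x st by (auto simp: dist_real_def)
        then have "dist (g x) (g s) < e" "dist (F x) (F t) < e"
          using d1[rule_format, of s x] d2[rule_format, of t x] x sub st by auto
        then show "\<bar>g x - g s\<bar> \<le> e" "\<bar>F x - F t\<bar> \<le> e" by (simp_all add: dist_real_def)
        show "\<bar>g' x\<bar> \<le> M" using M x sub by blast
      qed
      then show ?thesis
        using integral_interval_diff[OF absf_int st(1-3)] by (simp add: V_def algebra_simps)
    qed
    then show "\<exists>d>0. \<forall>s t. a \<le> s \<longrightarrow> s \<le> t \<longrightarrow> t \<le> b \<longrightarrow> t - s < d \<longrightarrow>
        \<bar>\<Phi> t - \<Phi> s\<bar> \<le> e * (V t - V s)"
      using \<open>d1 > 0\<close> \<open>d2 > 0\<close> by (intro exI[of _ "min d1 d2"]) auto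
  qed
  then show ?thesis by (simp add: \<Phi>_def algebra_simps)
qed

section \<open>The norm of \<open>L\<^sup>2(0, L)\<close>\<close>

lemma norm0_nonneg: "0 \<le> norm0 L g"
  unfolding norm0_def
  by (cases "(\<lambda>x. (g x)\<^sup>2) integrable_on {0..L}") (auto intro: integral_nonneg simp: not_integrable_integral)

lemma norm0_power2:
  assumes "continuous_on {0..L} g"
  shows "(norm0 L g)\<^sup>2 = integral {0..L} (\<lambda>x. (g x)\<^sup>2)"
  unfolding norm0_def
  by (intro real_sqrt_pow2 integral_nonneg integrable_continuous_real continuous_intros assms) simp

lemma norm0_mult: "norm0 L (\<lambda>x. c * g x) = \<bar>c\<bar> * norm0 L g"
  by (simp add: norm0_def power_mult_distrib real_sqrt_mult)

lemma discriminant_le_if_quadratic_nonneg: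
  fixes A B C :: real
  assumes "0 \<le> C" and nonneg: "\<And>t. 0 \<le> A - 2 * t * B + t\<^sup>2 * C"
  shows "B\<^sup>2 \<le> A * C"
proof (cases "C = 0")
  case True
  have "B = 0"
  proof (rule ccontr)
    assume "B \<noteq> 0"
    have "0 \<le> A - 2 * ((A + 1) / (2 * B)) * B + ((A + 1) / (2 * B))\<^sup>2 * C" by (rule nonneg)
    also have "\<dots> = -1" using \<open>B \<noteq> 0\<close> True by (simp add: field_simps)
    finally show False by simp
  qed
  with True show ?thesis by simp
next
  case False
  then have "C > 0" using \<open>0 \<le> C\<close> by simp
  have "0 \<le> A - 2 * (B / C) * B + (B / C)\<^sup>2 * C" by (rule nonneg)
  also have "\<dots> = A - B\<^sup>2 / C" using \<open>C > 0\<close> by (simp add: field_simps power2_eq_square)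
  finally show ?thesis using \<open>C > 0\<close> by (simp add: field_simps)
qed

lemma Cauchy_Schwarz_norm0:
  assumes u: "continuous_on {0..L} u" and v: "continuous_on {0..L} v"
  shows "integral {0..L} (\<lambda>x. u x * v x) \<le> norm0 L u * norm0 L v"
proof -
  define A B C where "A = integral {0..L} (\<lambda>x. (u x)\<^sup>2)" and "B = integral {0..L} (\<lambda>x. u x * v x)"
    and "C = integral {0..L} (\<lambda>x. (v x)\<^sup>2)"
  have "B\<^sup>2 \<le> A * C"
  proof (rule discriminant_le_if_quadratic_nonneg)
    show "0 \<le> C" unfolding C_def
      by (intro integral_nonneg integrable_continuous_real continuous_intros v) simp
    fix t :: real
    have "((\<lambda>x. (u x)\<^sup>2 - 2 * t * (u x * v x) + t\<^sup>2 * (v x)\<^sup>2) has_integral A - 2 * t * B + t\<^sup>2 * C) {0..L}"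
      unfolding A_def B_def C_def
      by (intro has_integral_add has_integral_diff has_integral_mult_right integrable_integral
            integrable_continuous_real continuous_intros u v)
    moreover have "(u x)\<^sup>2 - 2 * t * (u x * v x) + t\<^sup>2 * (v x)\<^sup>2 = (u x - t * v x)\<^sup>2" for x
      by (simp add: power2_eq_square algebra_simps)
    ultimately show "0 \<le> A - 2 * t * B + t\<^sup>2 * C" by (auto intro: has_integral_nonneg)
  qed
  then have "B \<le> sqrt A * sqrt C"
    by (metis abs_ge_self order_trans power2_abs real_le_rsqrt real_sqrt_mult)
  then show ?thesis by (simp add: A_def B_def C_def norm0_def)
qed

lemma norm0_add_le:
  assumes u: "continuous_on {0..L} u" and v: "continuous_on {0..L} v"
  shows "norm0 L (\<lambda>x. u x + v x) \<le> norm0 L u + norm0 L v"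
proof (rule power2_le_imp_le)
  have "((\<lambda>x. (u x)\<^sup>2 + 2 * (u x * v x) + (v x)\<^sup>2) has_integral
      (norm0 L u)\<^sup>2 + 2 * integral {0..L} (\<lambda>x. u x * v x) + (norm0 L v)\<^sup>2) {0..L}"
    unfolding norm0_power2[OF u] norm0_power2[OF v]
    by (intro has_integral_add has_integral_mult_right integrable_integral
          integrable_continuous_real continuous_intros u v)
  then have "(norm0 L (\<lambda>x. u x + v x))\<^sup>2 = (norm0 L u)\<^sup>2 + 2 * integral {0..L} (\<lambda>x. u x * v x) + (norm0 L v)\<^sup>2"
    using norm0_power2[OF continuous_on_add[OF u v]] by (simp add: power2_sum integral_unique algebra_simps)
  also have "\<dots> \<le> (norm0 L u + norm0 L v)\<^sup>2"
    using Cauchy_Schwarz_norm0[OF u v] by (simp add: power2_sum)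
  finally show "(norm0 L (\<lambda>x. u x + v x))\<^sup>2 \<le> (norm0 L u + norm0 L v)\<^sup>2" .
  show "0 \<le> norm0 L u + norm0 L v" by (simp add: norm0_nonneg add_nonneg_nonneg)
qed

lemma norm0_sum_le:
  assumes "finite I" and "\<forall>i\<in>I. continuous_on {0..L} (g i)"
  shows "norm0 L (\<lambda>x. \<Sum>i\<in>I. w i * g i x) \<le> (\<Sum>i\<in>I. \<bar>w i\<bar> * norm0 L (g i))"
  using assms
proof (induction I rule: finite_induct)
  case empty
  then show ?case by (simp add: norm0_def)
next
  case (insert i I)
  have "norm0 L (\<lambda>x. \<Sum>j\<in>insert i I. w j * g j x) = norm0 L (\<lambda>x. w i * g i x + (\<Sum>j\<in>I. w j * g j x))"
    using insert.hyps by simp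
  also have "\<dots> \<le> norm0 L (\<lambda>x. w i * g i x) + norm0 L (\<lambda>x. \<Sum>j\<in>I. w j * g j x)"
    using insert.prems by (intro norm0_add_le continuous_intros) auto
  also have "\<dots> \<le> \<bar>w i\<bar> * norm0 L (g i) + (\<Sum>j\<in>I. \<bar>w j\<bar> * norm0 L (g j))"
    using insert.IH insert.prems by (simp add: norm0_mult)
  finally show ?case using insert.hyps by simp
qed

lemma norm0_le_norm2: "0 \<le> \<beta> * \<alpha> \<Longrightarrow> norm0 L g \<le> norm2 L \<beta> \<alpha> g h"
  using real_sqrt_le_mono[of "(norm0 L g)\<^sup>2" "(norm0 L g)\<^sup>2 + \<beta> * \<alpha> * (norm0 L h)\<^sup>2"]
  by (simp add: norm2_def norm0_nonneg)

lemma integral_mult_le_except_negligible: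
  assumes "0 \<le> L" and "0 \<le> m" and f: "continuous_on {0..L} f"
    and fh: "(\<lambda>x. f x * h x) integrable_on {0..L}" and N: "negligible N"
    and h: "\<And>x. x \<in> {0..L} - N \<Longrightarrow> \<bar>h x\<bar> \<le> m"
  shows "integral {0..L} (\<lambda>x. f x * h x) \<le> m * sqrt L * norm0 L f"
proof -
  have "integral {0..L} (\<lambda>x. f x * h x) \<le> integral {0..L} (\<lambda>x. m * (\<bar>f x\<bar> * 1))"
  proof (rule integral_le_except_negligible[OF fh _ N])
    show "(\<lambda>x. m * (\<bar>f x\<bar> * 1)) integrable_on {0..L}"
      by (intro integrable_continuous_real continuous_intros f)
    fix x assume "x \<in> {0..L} - N"
    have "f x * h x \<le> \<bar>f x\<bar> * \<bar>h x\<bar>" by (simp add: abs_mult[symmetric])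
    also have "\<dots> \<le> \<bar>f x\<bar> * m" using h[OF \<open>x \<in> {0..L} - N\<close>] by (simp add: mult_left_mono)
    finally show "f x * h x \<le> m * (\<bar>f x\<bar> * 1)" by (simp add: mult.commute)
  qed
  also have "\<dots> \<le> m * (norm0 L (\<lambda>x. \<bar>f x\<bar>) * norm0 L (\<lambda>x. 1))"
    using Cauchy_Schwarz_norm0[of L "\<lambda>x. \<bar>f x\<bar>" "\<lambda>x. 1"] f \<open>0 \<le> m\<close>
    by (simp add: continuous_on_const continuous_on_rabs mult_left_mono)
  also have "\<dots> = m * sqrt L * norm0 L f" using \<open>0 \<le> L\<close> by (simp add: norm0_def)
  finally show ?thesis .
qed

section \<open>Energy estimate for simply supported \<open>H\<^sup>4\<close> functions\<close>

definition simply_supported :: "real \<Rightarrow> (real \<Rightarrow> real) \<Rightarrow> (nat \<Rightarrow> real \<Rightarrow> real) \<Rightarrow> bool" where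
  "simply_supported L f D \<longleftrightarrow> f 0 = 0 \<and> f L = 0 \<and> D 2 0 = 0 \<and> D 2 L = 0"

lemma H4_D0_eq: "H4 L f D \<Longrightarrow> x \<in> {0..L} \<Longrightarrow> D 0 x = f x"
  unfolding H4_def by blast

lemma H4_indefinite_integral:
  "H4 L f D \<Longrightarrow> k < 4 \<Longrightarrow> \<forall>x\<in>{0..L}. D k x = D k 0 + integral {0..x} (D (Suc k))"
  unfolding H4_def by blast

lemma H4_absolutely_integrable: "H4 L f D \<Longrightarrow> D 4 absolutely_integrable_on {0..L}"
  unfolding H4_def by blast

lemma H4_continuous:
  assumes H: "H4 L f D" and "k \<le> 3"
  shows "continuous_on {0..L} (D k)"
  using \<open>k \<le> 3\<close>
proof (induction k rule: inc_induct)
  case base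
  have four: "Suc 3 = 4" by simp
  have "D 4 integrable_on {0..L}"
    using H4_absolutely_integrable[OF H] by (rule set_lebesgue_integral_eq_integral(1))
  then show ?case
    using continuous_on_if_indefinite_integral[OF _ H4_indefinite_integral[OF H, of 3, unfolded four]] by simp
next
  case (step k)
  then have "k < 4" by simp
  with step.IH show ?case
    by (rule continuous_on_if_indefinite_integral[OF integrable_continuous_real H4_indefinite_integral[OF H]])
qed

lemma H4_integrable:
  assumes H: "H4 L f D" and "k \<le> 4"
  shows "D k integrable_on {0..L}"
proof (cases "k = 4")
  case True
  then show ?thesis using set_lebesgue_integral_eq_integral(1)[OF H4_absolutely_integrable[OF H]] by simp
next
  case False
  then show ?thesis using \<open>k \<le> 4\<close> by (intro integrable_continuous_real H4_continuous[OF H]) simp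
qed

lemma H4_continuous_fun: "H4 L f D \<Longrightarrow> continuous_on {0..L} f"
  by (rule continuous_on_eq[OF H4_continuous[of L f D 0]]) (simp_all add: H4_D0_eq)

lemma H4_has_derivative:
  assumes H: "H4 L f D" and "k < 3" and x: "x \<in> {0..L}"
  shows "(D k has_real_derivative D (Suc k) x) (at x within {0..L})"
proof (rule has_field_derivative_transform_within[where d=1])
  have "continuous_on {0..L} (D (Suc k))" using H4_continuous[OF H] \<open>k < 3\<close> by simp
  then show "((\<lambda>x. D k 0 + integral {0..x} (D (Suc k))) has_real_derivative D (Suc k) x) (at x within {0..L})"
    using DERIV_add[OF DERIV_const integral_has_real_derivative[OF _ x]] by simp
  have "k < 4" using \<open>k < 3\<close> by simp
  then show "D k 0 + integral {0..y} (D (Suc k)) = D k y" if "y \<in> {0..L}" for y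
    using bspec[OF H4_indefinite_integral[OF H] that] by simp
qed (use x in simp_all)

lemma H4_err_norm_identity:
  assumes "0 \<le> L" and H: "H4 L f D" and bc: "simply_supported L f D"
  shows "integral {0..L} (\<lambda>x. D 4 x * f x) = integral {0..L} (\<lambda>x. (D 2 x)\<^sup>2)"
proof -
  have four: "Suc 3 = 4" and three: "Suc 2 = 3" by simp_all
  have ends: "D 0 0 = 0" "D 0 L = 0" "D 2 0 = 0" "D 2 L = 0"
    using bc H4_D0_eq[OF H, of 0] H4_D0_eq[OF H, of L] \<open>0 \<le> L\<close> by (auto simp: simply_supported_def)
  have "integral {0..L} (\<lambda>x. D 4 x * f x) = integral {0..L} (\<lambda>x. D 4 x * D 0 x)"
    by (rule integral_cong) (simp add: H4_D0_eq[OF H])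
  also have "\<dots> = - integral {0..L} (\<lambda>x. D 3 x * D 1 x)"
    using integration_by_parts_indefinite_integral[OF \<open>0 \<le> L\<close> H4_absolutely_integrable[OF H]
        H4_indefinite_integral[OF H, of 3, unfolded four] _ H4_continuous[OF H, of 1]]
      H4_has_derivative[OF H, of 0] ends by simp
  also have "integral {0..L} (\<lambda>x. D 3 x * D 1 x) = - integral {0..L} (\<lambda>x. D 2 x * D 2 x)"
    using integration_by_parts_indefinite_integral[OF \<open>0 \<le> L\<close>
        absolutely_integrable_continuous_real[OF H4_continuous[OF H, of 3]]
        H4_indefinite_integral[OF H, of 2, unfolded three] _ H4_continuous[OF H, of 2]]
      H4_has_derivative[OF H, of 1] ends by (simp add: numeral_2_eq_2)
  finally show ?thesis by (simp add: power2_eq_square)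
qed

lemma H4_smooth_diff:
  assumes Y: "\<forall>k<4. \<forall>x. (Y k has_real_derivative Y (Suc k) x) (at x)"
    and Y4: "continuous_on UNIV (Y 4)" and H: "H4 L f D"
  shows "H4 L (\<lambda>x. Y 0 x - f x) (\<lambda>k x. Y k x - D k x)"
proof -
  have Y4_cont: "continuous_on {0..L} (Y 4)" using continuous_on_subset[OF Y4] by simp
  have D4_abs: "D 4 absolutely_integrable_on {0..L}" by (rule H4_absolutely_integrable[OF H])
  have rep: "Y k x - D k x = Y k 0 - D k 0 + integral {0..x} (\<lambda>z. Y (Suc k) z - D (Suc k) z)"
    if "k < 4" and x: "x \<in> {0..L}" for k x
  proof -
    have "(Y (Suc k) has_integral (Y k x - Y k 0)) {0..x}"
    proof (rule fundamental_theorem_of_calculus)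
      show "0 \<le> x" using x by simp
      fix z
      have "(Y k has_real_derivative Y (Suc k) z) (at z within {0..x})"
        using Y \<open>k < 4\<close> by (blast intro: has_field_derivative_at_within)
      then show "(Y k has_vector_derivative Y (Suc k) z) (at z within {0..x})"
        by (simp add: has_real_derivative_iff_has_vector_derivative)
    qed
    moreover have "D (Suc k) integrable_on {0..x}"
      using integrable_on_subinterval[OF H4_integrable[OF H]] that by auto
    ultimately show ?thesis
      using bspec[OF H4_indefinite_integral[OF H \<open>k < 4\<close>] x]
      by (simp add: integral_diff integral_unique has_integral_integrable)
  qed
  have "(\<lambda>x. (Y 4 x)\<^sup>2 - 2 * (D 4 x * Y 4 x) + (D 4 x)\<^sup>2) integrable_on {0..L}"
  proof (rule integrable_add[OF integrable_diff])
    show "(\<lambda>x. (Y 4 x)\<^sup>2) integrable_on {0..L}"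
      by (intro integrable_continuous_real continuous_intros Y4_cont)
    show "(\<lambda>x. 2 * (D 4 x * Y 4 x)) integrable_on {0..L}"
      using absolutely_integrable_mult_continuous[OF D4_abs Y4_cont]
      by (intro integrable_on_mult_right) (rule set_lebesgue_integral_eq_integral(1))
    show "(\<lambda>x. (D 4 x)\<^sup>2) integrable_on {0..L}" using H unfolding H4_def by blast
  qed
  then have "(\<lambda>x. (Y 4 x - D 4 x)\<^sup>2) integrable_on {0..L}"
    by (simp add: power2_diff algebra_simps)
  moreover have "(\<lambda>x. Y 4 x - D 4 x) absolutely_integrable_on {0..L}"
    by (rule set_integral_diff(1)[OF absolutely_integrable_continuous_real[OF Y4_cont] D4_abs])
  moreover have "\<forall>x\<in>{0..L}. Y 0 x - D 0 x = Y 0 x - f x" using H4_D0_eq[OF H] by simp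
  ultimately show ?thesis
    unfolding H4_def using rep by blast
qed

lemma H4_err_norm_inequality:
  assumes "0 \<le> L" and "0 \<le> \<beta> * \<alpha>" and "0 \<le> m"
    and H: "H4 L f D" and bc: "simply_supported L f D"
    and S: "continuous_on {0..L} S" and N: "negligible N"
    and residual: "\<forall>x\<in>{0..L} - N. \<bar>f x + \<beta> * \<alpha> * D 4 x - S x\<bar> \<le> m"
  shows "(norm2 L \<beta> \<alpha> f (D 2))\<^sup>2 \<le> norm0 L f * (norm0 L S + m * sqrt L)"
proof -
  define R where "R x = f x + \<beta> * \<alpha> * D 4 x" for x
  have f: "continuous_on {0..L} f" by (rule H4_continuous_fun[OF H])
  have D2: "continuous_on {0..L} (D 2)" by (rule H4_continuous[OF H]) simp
  have fD4: "(\<lambda>x. D 4 x * f x) integrable_on {0..L}"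
    using absolutely_integrable_mult_continuous[OF H4_absolutely_integrable[OF H] f]
    by (rule set_lebesgue_integral_eq_integral(1))
  have "((\<lambda>x. (f x)\<^sup>2 + \<beta> * \<alpha> * (D 4 x * f x)) has_integral
      (norm0 L f)\<^sup>2 + \<beta> * \<alpha> * (norm0 L (D 2))\<^sup>2) {0..L}"
    unfolding norm0_power2[OF f] norm0_power2[OF D2] H4_err_norm_identity[OF \<open>0 \<le> L\<close> H bc, symmetric]
    by (intro has_integral_add has_integral_mult_right integrable_integral fD4 integrable_continuous_real
          continuous_intros f)
  moreover have "(norm2 L \<beta> \<alpha> f (D 2))\<^sup>2 = (norm0 L f)\<^sup>2 + \<beta> * \<alpha> * (norm0 L (D 2))\<^sup>2"
    unfolding norm2_def using \<open>0 \<le> \<beta> * \<alpha>\<close> by simp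
  ultimately have fR: "((\<lambda>x. f x * R x) has_integral (norm2 L \<beta> \<alpha> f (D 2))\<^sup>2) {0..L}"
    by (simp add: R_def power2_eq_square algebra_simps)
  have fS: "(\<lambda>x. f x * S x) integrable_on {0..L}"
    by (intro integrable_continuous_real continuous_intros f S)
  have fRS: "((\<lambda>x. f x * (R x - S x)) has_integral
      (norm2 L \<beta> \<alpha> f (D 2))\<^sup>2 - integral {0..L} (\<lambda>x. f x * S x)) {0..L}"
    using has_integral_diff[OF fR integrable_integral[OF fS]] by (simp add: right_diff_distrib)
  then have "(norm2 L \<beta> \<alpha> f (D 2))\<^sup>2
      = integral {0..L} (\<lambda>x. f x * S x) + integral {0..L} (\<lambda>x. f x * (R x - S x))"
    by (simp add: integral_unique)
  also have "\<dots> \<le> norm0 L f * norm0 L S + m * sqrt L * norm0 L f"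
  proof (rule add_mono[OF Cauchy_Schwarz_norm0[OF f S]])
    show "integral {0..L} (\<lambda>x. f x * (R x - S x)) \<le> m * sqrt L * norm0 L f"
      using residual
      by (intro integral_mult_le_except_negligible[OF \<open>0 \<le> L\<close> \<open>0 \<le> m\<close> f has_integral_integrable[OF fRS] N])
         (simp add: R_def)
  qed
  finally show ?thesis by (simp add: algebra_simps)
qed

lemma H4_err_norm_estimate:
  assumes "0 \<le> L" and "0 \<le> \<beta> * \<alpha>" and "0 \<le> m"
    and H: "H4 L f D" and bc: "simply_supported L f D"
    and S: "continuous_on {0..L} S" and N: "negligible N"
    and residual: "\<forall>x\<in>{0..L} - N. \<bar>f x + \<beta> * \<alpha> * D 4 x - S x\<bar> \<le> m"
  shows "norm2 L \<beta> \<alpha> f (D 2) \<le> norm0 L S + m * sqrt L"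
proof -
  define E where "E = norm2 L \<beta> \<alpha> f (D 2)"
  have n_le_E: "norm0 L f \<le> E" unfolding E_def by (rule norm0_le_norm2[OF \<open>0 \<le> \<beta> * \<alpha>\<close>])
  have "E\<^sup>2 \<le> norm0 L f * (norm0 L S + m * sqrt L)"
    unfolding E_def by (rule H4_err_norm_inequality[OF assms])
  also have "\<dots> \<le> E * (norm0 L S + m * sqrt L)"
    using n_le_E \<open>0 \<le> m\<close> \<open>0 \<le> L\<close> by (intro mult_right_mono add_nonneg_nonneg norm0_nonneg) simp_all
  finally have "E * E \<le> E * (norm0 L S + m * sqrt L)" by (simp add: power2_eq_square)
  then show ?thesis
    using n_le_E norm0_nonneg[of L f] \<open>0 \<le> m\<close> \<open>0 \<le> L\<close> norm0_nonneg[of L S]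
    by (cases "E = 0") (simp_all add: E_def[symmetric])
qed

section \<open>The L1 weights and the time-discrete scheme\<close>

lemma dxk_0 [simp]: "dxk 0 y t = (\<lambda>x. y x t)"
  by (simp add: dxk_def)

lemma bcoef_0 [simp]: "bcoef \<gamma> 0 = 1"
  by (simp add: bcoef_def)

lemma bcoef_mean_value:
  assumes "\<gamma> < 1"
  obtains z where "real j < z" "z < real j + 1" "bcoef \<gamma> j = (1 - \<gamma>) * z powr (- \<gamma>)"
proof -
  have "continuous_on {real j..real j + 1} (\<lambda>x. x powr (1 - \<gamma>))"
    using assms by (intro continuous_on_powr' continuous_intros) auto
  moreover have "(\<lambda>x. x powr (1 - \<gamma>)) differentiable (at x)" if "real j < x" for x
    using has_real_derivative_powr[of x "1 - \<gamma>"] that real_differentiable_def by fastforce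
  ultimately obtain l z where z: "real j < z" "z < real j + 1"
    and l: "((\<lambda>x. x powr (1 - \<gamma>)) has_real_derivative l) (at z)"
    and diff: "(real j + 1) powr (1 - \<gamma>) - real j powr (1 - \<gamma>) = (real j + 1 - real j) * l"
    using MVT[of "real j" "real j + 1" "\<lambda>x. x powr (1 - \<gamma>)"] by auto
  have "l = (1 - \<gamma>) * z powr (1 - \<gamma> - 1)"
    using z by (intro DERIV_unique[OF l has_real_derivative_powr]) simp
  then show thesis using that[of z] z diff by (simp add: bcoef_def)
qed

lemma bcoef_pos: "\<gamma> < 1 \<Longrightarrow> 0 < bcoef \<gamma> j"
  by (rule bcoef_mean_value[of \<gamma> j]) auto

lemma bcoef_Suc_le:
  assumes "0 \<le> \<gamma>" "\<gamma> < 1"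
  shows "bcoef \<gamma> (Suc j) \<le> bcoef \<gamma> j"
proof -
  obtain z where z: "real j < z" "z < real j + 1" "bcoef \<gamma> j = (1 - \<gamma>) * z powr (- \<gamma>)"
    using bcoef_mean_value[OF \<open>\<gamma> < 1\<close>] .
  obtain w where w: "real (Suc j) < w" "bcoef \<gamma> (Suc j) = (1 - \<gamma>) * w powr (- \<gamma>)"
    using bcoef_mean_value[OF \<open>\<gamma> < 1\<close>] by metis
  have "w powr (- \<gamma>) \<le> z powr (- \<gamma>)" using z w assms by (intro powr_mono2') auto
  then show ?thesis using z w assms by (simp add: mult_left_mono)
qed

lemma bcoef_lower_bound:
  assumes "0 \<le> \<gamma>" "\<gamma> < 1"
  shows "(1 - \<gamma>) * (real j + 1) powr (- \<gamma>) \<le> bcoef \<gamma> j"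
proof -
  obtain z where z: "real j < z" "z < real j + 1" "bcoef \<gamma> j = (1 - \<gamma>) * z powr (- \<gamma>)"
    using bcoef_mean_value[OF \<open>\<gamma> < 1\<close>] .
  have "(real j + 1) powr (- \<gamma>) \<le> z powr (- \<gamma>)" using z assms by (intro powr_mono2') auto
  then show ?thesis using z assms by (simp add: mult_left_mono)
qed

lemma sum_mult_diff_by_parts:
  fixes b c :: "nat \<Rightarrow> real"
  shows "(\<Sum>j<Suc n. b j * (c j - c (Suc j)))
       = b 0 * c 0 - (\<Sum>j<n. (b j - b (Suc j)) * c (Suc j)) - b n * c (Suc n)"
  by (induction n) (simp_all add: algebra_simps)

text \<open>The weights \<open>b j - b (j + 1)\<close>, \<open>j < p\<close>, sum to \<open>1 - b p\<close>, so \<open>M / b p\<close> is a supersolution.\<close>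

lemma L1_discrete_gronwall:
  fixes E b :: "nat \<Rightarrow> real"
  assumes "0 \<le> M" and b0: "b 0 = 1" and b_pos: "\<And>j. 0 < b j" and b_Suc: "\<And>j. b (Suc j) \<le> b j"
    and step: "\<And>p. p + 1 \<le> K \<Longrightarrow> E (p + 1) \<le> (\<Sum>j<p. (b j - b (j + 1)) * E (p - j)) + M"
  shows "1 \<le> q \<Longrightarrow> q \<le> K \<Longrightarrow> E q \<le> M / b (q - 1)"
proof (induction q rule: less_induct)
  case (less q)
  define p where "p = q - 1"
  have q: "q = p + 1" "p + 1 \<le> K" using less.prems by (auto simp: p_def)
  have b_anti: "b m \<le> b n" if "n \<le> m" for n m using lift_Suc_antimono_le[of b, OF b_Suc that] .
  have IH: "E (p - j) \<le> M / b p" if "j < p" for j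
  proof -
    have "E (p - j) \<le> M / b (p - j - 1)" using less.IH[of "p - j"] q that by auto
    also have "\<dots> \<le> M / b p" using b_anti[of "p - j - 1" p] b_pos \<open>0 \<le> M\<close> by (simp add: divide_left_mono)
    finally show ?thesis .
  qed
  have "E q \<le> (\<Sum>j<p. (b j - b (j + 1)) * E (p - j)) + M" using step[OF q(2)] q(1) by simp
  also have "\<dots> \<le> (\<Sum>j<p. (b j - b (j + 1)) * (M / b p)) + M"
    using IH b_Suc by (intro add_right_mono sum_mono mult_left_mono) (auto simp: diff_ge_0_iff_ge)
  also have "\<dots> = (b 0 - b p) * (M / b p) + M"
    unfolding sum_distrib_right[symmetric] using sum_lessThan_telescope'[of b p] by simp
  also have "\<dots> = M / b p" using b_pos[of p] b0 by (simp add: field_simps)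
  finally show ?case by (simp add: p_def)
qed

lemma discrete_solution_step:
  assumes sol: "discrete_solution L T \<gamma> \<alpha> u v0 K ys Ds" and "p + 1 \<le> K"
  defines "\<beta> \<equiv> Gamma (2 - \<gamma>) * (T / real K) powr \<gamma>"
  shows "\<exists>N. negligible N \<and> (\<forall>x\<in>{0..L} - N.
           ys (p + 1) x + \<beta> * \<alpha> * Ds (p + 1) 4 x
             = (\<Sum>j<p. (bcoef \<gamma> j - bcoef \<gamma> (j + 1)) * ys (p - j) x) + bcoef \<gamma> p * ys 0 x
               + \<beta> * u x (real (p + 1) * (T / real K)))"
proof (cases "p = 0")
  case True
  have "\<exists>N. negligible N \<and> (\<forall>x\<in>{0..L} - N. ys 1 x + \<beta> * \<alpha> * Ds 1 4 x = ys 0 x + \<beta> * u x (T / real K))"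
    using sol unfolding discrete_solution_def Let_def \<beta>_def by blast
  then show ?thesis using True by simp
next
  case False
  then have "p \<in> {1..K - 1}" using \<open>p + 1 \<le> K\<close> by auto
  then have "\<exists>N. negligible N \<and> (\<forall>x\<in>{0..L} - N.
      ys (p + 1) x + \<beta> * \<alpha> * Ds (p + 1) 4 x =
        (1 - bcoef \<gamma> 1) * ys p x + (\<Sum>j\<in>{1..p - 1}. (bcoef \<gamma> j - bcoef \<gamma> (j + 1)) * ys (p - j) x)
        + bcoef \<gamma> p * ys 0 x + \<beta> * u x (real (p + 1) * (T / real K)))"
    using sol unfolding discrete_solution_def Let_def \<beta>_def by blast
  moreover have "{..<p} = insert 0 {1..p - 1}" using False by auto
  ultimately show ?thesis by simp
qed

lemma L1_residual_scaled:
  assumes "0 < T" "0 < K" "\<gamma> < 1"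
  defines "\<beta> \<equiv> Gamma (2 - \<gamma>) * (T / real K) powr \<gamma>"
  shows "\<beta> * caputo \<gamma> y x (real p * (T / real K))
       = \<beta> * l1_resid \<gamma> T K y x p
         + (\<Sum>j<p. bcoef \<gamma> j * (y x (real (p - j) * (T / real K)) - y x (real (p - j - 1) * (T / real K))))"
proof -
  have "Gamma (2 - \<gamma>) > 0" using \<open>\<gamma> < 1\<close> by (intro Gamma_real_pos) simp
  moreover have "(T / real K) powr \<gamma> > 0" using assms by simp
  ultimately show ?thesis
    by (simp add: l1_resid_def \<beta>_def sum_divide_distrib[symmetric] field_simps)
qed

section \<open>Error of the time-discrete scheme\<close>

locale L1_scheme =
  fixes L T \<gamma> \<alpha> c :: real and y u :: "real \<Rightarrow> real \<Rightarrow> real" and v0 :: "real \<Rightarrow> real"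
    and K :: nat and ys :: "nat \<Rightarrow> real \<Rightarrow> real" and Ds :: "nat \<Rightarrow> nat \<Rightarrow> real \<Rightarrow> real"
  assumes L_pos: "0 < L" and T_pos: "0 < T" and gam: "0 < \<gamma>" "\<gamma> < 1" and alpha_pos: "0 < \<alpha>"
    and K_pos: "1 \<le> K"
    and y_xsmooth: "\<forall>t\<in>{0..T}. \<forall>k<4. \<forall>x. (dxk k y t has_real_derivative dxk (Suc k) y t x) (at x)"
    and y_x4cont: "\<forall>t\<in>{0..T}. continuous_on UNIV (dxk 4 y t)"
    and pde: "\<forall>x\<in>{0..L}. \<forall>t\<in>{0..T}. caputo \<gamma> y x t + \<alpha> * dxk 4 y t x = u x t"
    and init: "\<forall>x\<in>{0..L}. y x 0 = v0 x"
    and bc: "\<forall>t\<in>{0..T}. y 0 t = 0 \<and> y L t = 0 \<and> dxk 2 y t 0 = 0 \<and> dxk 2 y t L = 0"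
    and l1_bound: "\<forall>x\<in>{0..L}. \<forall>p\<in>{1..K}. \<bar>l1_resid \<gamma> T K y x p\<bar> \<le> c * (T / real K) powr (2 - \<gamma>)"
    and sol: "discrete_solution L T \<gamma> \<alpha> u v0 K ys Ds"
begin

definition dt :: real where "dt = T / real K"

definition \<beta> :: real where "\<beta> = Gamma (2 - \<gamma>) * dt powr \<gamma>"

definition err :: "nat \<Rightarrow> real \<Rightarrow> real" where
  "err p = (\<lambda>x. y x (real p * dt) - ys p x)"

definition err_deriv :: "nat \<Rightarrow> nat \<Rightarrow> real \<Rightarrow> real" where
  "err_deriv p = (\<lambda>k x. dxk k y (real p * dt) x - Ds p k x)"

definition err_norm :: "nat \<Rightarrow> real" where
  "err_norm p = norm2 L \<beta> \<alpha> (err p) (err_deriv p 2)"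

lemma dt_pos: "0 < dt"
  using T_pos K_pos by (simp add: dt_def)

lemma beta_pos: "0 < \<beta>"
  using gam dt_pos by (simp add: \<beta>_def Gamma_real_pos)

lemma c_nonneg: "0 \<le> c"
proof -
  have "\<bar>l1_resid \<gamma> T K y 0 1\<bar> \<le> c * dt powr (2 - \<gamma>)"
    using l1_bound L_pos K_pos by (simp add: dt_def)
  then have "0 \<le> c * dt powr (2 - \<gamma>)" by (meson abs_ge_zero order_trans)
  moreover have "0 < dt powr (2 - \<gamma>)" using dt_pos by simp
  ultimately show ?thesis by (simp add: zero_le_mult_iff)
qed

lemma time_mem:
  assumes "p \<le> K"
  shows "real p * dt \<in> {0..T}"
proof -
  have "real p * dt \<le> real K * dt" using assms dt_pos by (simp add: mult_right_mono)
  also have "real K * dt = T" using K_pos by (simp add: dt_def)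
  finally show ?thesis using dt_pos by simp
qed

lemma err_H4:
  assumes "p \<in> {1..K}"
  shows "H4 L (err p) (err_deriv p)"
proof -
  define t where "t = real p * dt"
  have t: "t \<in> {0..T}" unfolding t_def using assms by (intro time_mem) simp
  have "\<forall>k<4. \<forall>x. (dxk k y t has_real_derivative dxk (Suc k) y t x) (at x)"
    and "continuous_on UNIV (dxk 4 y t)" using y_xsmooth y_x4cont t by blast+
  moreover have "H4 L (ys p) (Ds p)" using sol assms unfolding discrete_solution_def Let_def by blast
  ultimately show ?thesis
    using H4_smooth_diff[of "\<lambda>k. dxk k y t"] by (simp add: err_def err_deriv_def t_def)
qed

lemma err_simply_supported:
  assumes "p \<in> {1..K}"
  shows "simply_supported L (err p) (err_deriv p)"
proof -
  have "real p * dt \<in> {0..T}" using assms by (intro time_mem) simp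
  moreover have "ys p 0 = 0 \<and> ys p L = 0 \<and> Ds p 2 0 = 0 \<and> Ds p 2 L = 0"
    using sol assms unfolding discrete_solution_def Let_def by blast
  ultimately show ?thesis using bc by (simp add: simply_supported_def err_def err_deriv_def)
qed

lemma exact_solution_scheme:
  assumes "p + 1 \<le> K" and x: "x \<in> {0..L}"
  shows "y x (real (p + 1) * dt) + \<beta> * \<alpha> * dxk 4 y (real (p + 1) * dt) x
       = (\<Sum>j<p. (bcoef \<gamma> j - bcoef \<gamma> (j + 1)) * y x (real (p - j) * dt)) + bcoef \<gamma> p * y x 0
         + \<beta> * u x (real (p + 1) * dt) - \<beta> * l1_resid \<gamma> T K y x (p + 1)"
proof -
  define Y where "Y i = y x (real i * dt)" for i
  define t where "t = real (p + 1) * dt"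
  have "caputo \<gamma> y x t + \<alpha> * dxk 4 y t x = u x t"
    using pde x time_mem[OF assms(1)] unfolding t_def by blast
  then have "\<beta> * u x t = \<beta> * (caputo \<gamma> y x t + \<alpha> * dxk 4 y t x)" by simp
  then have "\<beta> * u x (real (p + 1) * dt)
      = \<beta> * caputo \<gamma> y x (real (p + 1) * dt) + \<beta> * \<alpha> * dxk 4 y (real (p + 1) * dt) x"
    by (simp add: t_def algebra_simps)
  also have "\<beta> * caputo \<gamma> y x (real (p + 1) * dt)
      = \<beta> * l1_resid \<gamma> T K y x (p + 1) + (\<Sum>j<Suc p. bcoef \<gamma> j * (Y (Suc p - j) - Y (p - j)))"
    using L1_residual_scaled[OF T_pos _ gam(2), of K y x "p + 1"] K_pos
    by (simp add: \<beta>_def dt_def Y_def)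
  also have "(\<Sum>j<Suc p. bcoef \<gamma> j * (Y (Suc p - j) - Y (p - j)))
      = Y (p + 1) - (\<Sum>j<p. (bcoef \<gamma> j - bcoef \<gamma> (j + 1)) * Y (p - j)) - bcoef \<gamma> p * Y 0"
    using sum_mult_diff_by_parts[of "bcoef \<gamma>" "\<lambda>j. Y (Suc p - j)" p] by (simp add: Suc_diff_le)
  finally show ?thesis by (simp add: Y_def algebra_simps)
qed

lemma err_residual_le:
  assumes "p + 1 \<le> K"
  shows "\<exists>N. negligible N \<and> (\<forall>x\<in>{0..L} - N.
           \<bar>err (p + 1) x + \<beta> * \<alpha> * err_deriv (p + 1) 4 x
             - (\<Sum>j<p. (bcoef \<gamma> j - bcoef \<gamma> (j + 1)) * err (p - j) x)\<bar> \<le> \<beta> * (c * dt powr (2 - \<gamma>)))"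
proof -
  obtain N where N: "negligible N" and scheme: "\<forall>x\<in>{0..L} - N.
      ys (p + 1) x + \<beta> * \<alpha> * Ds (p + 1) 4 x
        = (\<Sum>j<p. (bcoef \<gamma> j - bcoef \<gamma> (j + 1)) * ys (p - j) x) + bcoef \<gamma> p * ys 0 x
          + \<beta> * u x (real (p + 1) * dt)"
    using discrete_solution_step[OF sol assms] unfolding \<beta>_def dt_def by blast
  have "\<bar>err (p + 1) x + \<beta> * \<alpha> * err_deriv (p + 1) 4 x
          - (\<Sum>j<p. (bcoef \<gamma> j - bcoef \<gamma> (j + 1)) * err (p - j) x)\<bar> \<le> \<beta> * (c * dt powr (2 - \<gamma>))"
    if x: "x \<in> {0..L} - N" for x
  proof -
    have "ys 0 x = y x 0" using sol init x unfolding discrete_solution_def Let_def by auto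
    then have "ys (p + 1) x + \<beta> * \<alpha> * Ds (p + 1) 4 x
        = (\<Sum>j<p. (bcoef \<gamma> j - bcoef \<gamma> (j + 1)) * ys (p - j) x) + bcoef \<gamma> p * y x 0
          + \<beta> * u x (real (p + 1) * dt)"
      using scheme x by simp
    moreover have "err (p + 1) x + \<beta> * \<alpha> * err_deriv (p + 1) 4 x
          - (\<Sum>j<p. (bcoef \<gamma> j - bcoef \<gamma> (j + 1)) * err (p - j) x)
        = (y x (real (p + 1) * dt) + \<beta> * \<alpha> * dxk 4 y (real (p + 1) * dt) x)
          - (ys (p + 1) x + \<beta> * \<alpha> * Ds (p + 1) 4 x)
          - (\<Sum>j<p. (bcoef \<gamma> j - bcoef \<gamma> (j + 1)) * y x (real (p - j) * dt))
          + (\<Sum>j<p. (bcoef \<gamma> j - bcoef \<gamma> (j + 1)) * ys (p - j) x)"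
      by (simp add: err_def err_deriv_def sum_subtractf[symmetric] algebra_simps)
    ultimately have "err (p + 1) x + \<beta> * \<alpha> * err_deriv (p + 1) 4 x
          - (\<Sum>j<p. (bcoef \<gamma> j - bcoef \<gamma> (j + 1)) * err (p - j) x) = - \<beta> * l1_resid \<gamma> T K y x (p + 1)"
      using exact_solution_scheme[OF assms, of x] x by simp
    moreover have "\<bar>l1_resid \<gamma> T K y x (p + 1)\<bar> \<le> c * dt powr (2 - \<gamma>)"
      using l1_bound x assms by (simp add: dt_def)
    ultimately show ?thesis using beta_pos by (simp add: abs_mult)
  qed
  with N show ?thesis by blast
qed

lemma err_norm_step:
  assumes "p + 1 \<le> K"
  shows "err_norm (p + 1) \<le> (\<Sum>j<p. (bcoef \<gamma> j - bcoef \<gamma> (j + 1)) * err_norm (p - j))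
                            + \<beta> * c * dt powr (2 - \<gamma>) * sqrt L"
proof -
  define w where "w j = bcoef \<gamma> j - bcoef \<gamma> (j + 1)" for j
  define S where "S x = (\<Sum>j<p. w j * err (p - j) x)" for x
  have w_nonneg: "0 \<le> w j" for j using bcoef_Suc_le[of \<gamma> j] gam by (simp add: w_def)
  have ab: "0 \<le> \<beta> * \<alpha>" using beta_pos alpha_pos by simp
  have err_cont: "\<forall>j\<in>{..<p}. continuous_on {0..L} (err (p - j))"
    using assms by (auto intro!: H4_continuous_fun[OF err_H4])
  obtain N where "negligible N" and residual: "\<forall>x\<in>{0..L} - N.
      \<bar>err (p + 1) x + \<beta> * \<alpha> * err_deriv (p + 1) 4 x - S x\<bar> \<le> \<beta> * (c * dt powr (2 - \<gamma>))"
    using err_residual_le[OF assms] unfolding S_def w_def by blast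
  have "err_norm (p + 1) \<le> norm0 L S + \<beta> * (c * dt powr (2 - \<gamma>)) * sqrt L"
    unfolding err_norm_def
  proof (rule H4_err_norm_estimate[OF _ ab _ err_H4 err_simply_supported _ \<open>negligible N\<close> residual])
    show "continuous_on {0..L} S"
      unfolding S_def using err_cont by (intro continuous_on_sum continuous_intros) auto
  qed (use L_pos beta_pos c_nonneg assms in auto)
  also have "norm0 L S \<le> (\<Sum>j<p. \<bar>w j\<bar> * norm0 L (err (p - j)))"
    unfolding S_def by (rule norm0_sum_le[OF _ err_cont]) simp
  also have "\<dots> \<le> (\<Sum>j<p. w j * err_norm (p - j))"
    using w_nonneg norm0_le_norm2[OF ab] by (intro sum_mono) (simp add: err_norm_def mult_left_mono)
  finally show ?thesis by (simp add: w_def mult.assoc)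
qed

lemma err_norm_le:
  assumes "q \<in> {1..K}"
  shows "err_norm q \<le> Gamma (2 - \<gamma>) * sqrt L * c / (1 - \<gamma>) * T powr \<gamma> * dt powr (2 - \<gamma>)"
proof -
  define M where "M = \<beta> * c * dt powr (2 - \<gamma>) * sqrt L"
  have M_nonneg: "0 \<le> M" using beta_pos c_nonneg L_pos by (simp add: M_def)
  have q: "1 \<le> q" "q \<le> K" "0 < real q" using assms by auto
  have "err_norm q \<le> M / bcoef \<gamma> (q - 1)"
  proof (rule L1_discrete_gronwall[where b = "bcoef \<gamma>" and K = K])
    show "err_norm (p + 1) \<le> (\<Sum>j<p. (bcoef \<gamma> j - bcoef \<gamma> (j + 1)) * err_norm (p - j)) + M"
      if "p + 1 \<le> K" for p
      using err_norm_step[OF that] by (simp add: M_def)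
  qed (use M_nonneg q gam bcoef_pos bcoef_Suc_le in auto)
  also have "\<dots> \<le> M / ((1 - \<gamma>) * real q powr (- \<gamma>))"
    using bcoef_lower_bound[of \<gamma> "q - 1"] bcoef_pos[OF gam(2)] gam q M_nonneg
    by (intro divide_left_mono mult_pos_pos) (simp_all add: of_nat_diff)
  also have "\<dots> = Gamma (2 - \<gamma>) * sqrt L * c / (1 - \<gamma>) * (real q * dt) powr \<gamma> * dt powr (2 - \<gamma>)"
    using gam q dt_pos by (simp add: M_def \<beta>_def powr_minus powr_mult field_simps)
  also have "\<dots> \<le> Gamma (2 - \<gamma>) * sqrt L * c / (1 - \<gamma>) * T powr \<gamma> * dt powr (2 - \<gamma>)"
    using time_mem[OF q(2)] gam c_nonneg L_pos Gamma_real_pos[of "2 - \<gamma>"]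
    by (intro mult_right_mono mult_left_mono powr_mono2) auto
  finally show ?thesis .
qed

end

theorem theorem2:
  fixes L T \<gamma> \<alpha> c :: real
    and y u :: "real \<Rightarrow> real \<Rightarrow> real" and v0 :: "real \<Rightarrow> real"
  assumes L_pos: "L > 0" and T_pos: "T > 0"
    and gam: "0 < \<gamma>" "\<gamma> < 1" and alpha_pos: "\<alpha> > 0"
    \<comment> \<open>smoothness of the exact solution in x (C^4 for each time)\<close>
    and y_xsmooth: "\<forall>t\<in>{0..T}. \<forall>k<4. \<forall>x. (dxk k y t has_real_derivative dxk (Suc k) y t x) (at x)"
    and y_x4cont: "\<forall>t\<in>{0..T}. continuous_on UNIV (dxk 4 y t)"
    \<comment> \<open>regularity in t needed for the Caputo derivative\<close>
    and y_tcont: "\<forall>x\<in>{0..L}. continuous_on {0..T} (\<lambda>t. y x t)"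
    and y_tdiff: "\<forall>x\<in>{0..L}. \<forall>s\<in>{0<..<T}. (\<lambda>t. y x t) differentiable (at s)"
    and y_caputo_int: "\<forall>x\<in>{0..L}. \<forall>t\<in>{0<..T}.
          (\<lambda>s. deriv (\<lambda>r. y x r) s * (t - s) powr (- \<gamma>)) integrable_on {0..t}"
    \<comment> \<open>the PDE, initial and boundary conditions\<close>
    and pde: "\<forall>x\<in>{0..L}. \<forall>t\<in>{0..T}. caputo \<gamma> y x t + \<alpha> * dxk 4 y t x = u x t"
    and init: "\<forall>x\<in>{0..L}. y x 0 = v0 x"
    and bc: "\<forall>t\<in>{0..T}. y 0 t = 0 \<and> y L t = 0 \<and> dxk 2 y t 0 = 0 \<and> dxk 2 y t L = 0"
    \<comment> \<open>L1 truncation error bound, c depending only on y (uniform in K)\<close>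
    and l1_bound: "\<forall>K::nat. K \<ge> 1 \<longrightarrow> (\<forall>x\<in>{0..L}. \<forall>p\<in>{1..K}.
          \<bar>l1_resid \<gamma> T K y x p\<bar> \<le> c * (T / real K) powr (2 - \<gamma>))"
  shows "\<exists>C. \<forall>K::nat. \<forall>ys Ds. K \<ge> 1 \<and> discrete_solution L T \<gamma> \<alpha> u v0 K ys Ds \<longrightarrow>
           (\<forall>p\<in>{1..K}.
              norm2 L (Gamma (2 - \<gamma>) * (T / real K) powr \<gamma>) \<alpha>
                (\<lambda>x. y x (real p * (T / real K)) - ys p x)
                (\<lambda>x. dxk 2 y (real p * (T / real K)) x - Ds p 2 x)
              \<le> C * T powr \<gamma> * (T / real K) powr (2 - \<gamma>))"
proof -
  text \<open>The regularity of \<open>y\<close> in \<open>t\<close> only serves to justify \<open>l1_bound\<close>, which is assumed.\<close>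
  define C where "C = Gamma (2 - \<gamma>) * sqrt L * c / (1 - \<gamma>)"
  have "norm2 L (Gamma (2 - \<gamma>) * (T / real K) powr \<gamma>) \<alpha>
          (\<lambda>x. y x (real p * (T / real K)) - ys p x) (\<lambda>x. dxk 2 y (real p * (T / real K)) x - Ds p 2 x)
        \<le> C * T powr \<gamma> * (T / real K) powr (2 - \<gamma>)"
    if "1 \<le> K" "discrete_solution L T \<gamma> \<alpha> u v0 K ys Ds" "p \<in> {1..K}" for K ys Ds p
  proof -
    interpret L1_scheme L T \<gamma> \<alpha> c y u v0 K ys Ds
      by unfold_locales (use assms that in blast)+
    show ?thesis
      using err_norm_le[OF that(3)]
      by (simp add: C_def err_norm_def err_def err_deriv_def \<beta>_def dt_def)
  qed
  then show ?thesis by blast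
qed

end
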